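(* Let $n,q$ be positive integers and let $f_{n,q}:\mathbb{C}^3\to\mathbb{C}$ be the polynomial $f_{n,q}(x,y,z)=x-3x^{2n+1}y^{2q}+2x^{3n+1}y^{3q}+yz$. Then there exists a polynomial automorphism $P=(P_1,P_2,P_3):\mathbb{C}^3\to\mathbb{C}^3$ (a polynomial map with polynomial inverse) such that $f_{n,q}=P_1$. *)

theory Defs
  imports Complex_Main
begin

text \<open>A polynomial function on C^3: a finite linear combination of monomials.
  Over the infinite field C polynomial functions correspond exactly to polynomials.\<close>
definition poly3_fun :: "(complex \<Rightarrow> complex \<Rightarrow> complex \<Rightarrow> complex) \<Rightarrow> bool" where
  "poly3_fun f \<longleftrightarrow> (\<exists>S c. finite S \<and>
     (\<forall>x y z. f x y z = (\<Sum>(i,j,k)\<in>S. c (i,j,k) * x ^ i * y ^ j * z ^ k)))"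

definition poly_automorphism3 ::
  "(complex \<Rightarrow> complex \<Rightarrow> complex \<Rightarrow> complex) \<Rightarrow>
   (complex \<Rightarrow> complex \<Rightarrow> complex \<Rightarrow> complex) \<Rightarrow>
   (complex \<Rightarrow> complex \<Rightarrow> complex \<Rightarrow> complex) \<Rightarrow> bool" where
  "poly_automorphism3 P1 P2 P3 \<longleftrightarrow>
     poly3_fun P1 \<and> poly3_fun P2 \<and> poly3_fun P3 \<and>
     (\<exists>Q1 Q2 Q3. poly3_fun Q1 \<and> poly3_fun Q2 \<and> poly3_fun Q3 \<and>
       (\<forall>x y z. Q1 (P1 x y z) (P2 x y z) (P3 x y z) = x \<and>
                Q2 (P1 x y z) (P2 x y z) (P3 x y z) = y \<and>
                Q3 (P1 x y z) (P2 x y z) (P3 x y z) = z) \<and>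
       (\<forall>x y z. P1 (Q1 x y z) (Q2 x y z) (Q3 x y z) = x \<and>
                P2 (Q1 x y z) (Q2 x y z) (Q3 x y z) = y \<and>
                P3 (Q1 x y z) (Q2 x y z) (Q3 x y z) = z))"

end

theory Submission
  imports Defs "HOL-Library.Product_Plus"
begin

text \<open>Because \<open>q > 0\<close>, both non-linear terms \<open>3 x^(2n+1) y^(2q)\<close> and \<open>2 x^(3n+1) y^(3q)\<close>
  are divisible by \<open>y\<close>, so the polynomial equals \<open>x + y (z + G(x,y))\<close>.  This is the first
  component of the composite of the triangular maps \<open>(x,y,z) \<mapsto> (x, y, z + G(x,y))\<close> and
  \<open>(x,y,z) \<mapsto> (x + y z, y, z)\<close>, both of which have polynomial inverses.\<close>

definition monomial3 :: "nat \<times> nat \<times> nat \<Rightarrow> complex \<Rightarrow> complex \<Rightarrow> complex \<Rightarrow> complex" where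
  "monomial3 s x y z = (case s of (i, j, k) \<Rightarrow> x ^ i * y ^ j * z ^ k)"

lemma monomial3_add: "monomial3 (s + t) x y z = monomial3 s x y z * monomial3 t x y z"
  by (cases s, cases t) (simp add: monomial3_def power_add mult_ac)

lemma poly3_fun_iff_monomial3:
  "poly3_fun f \<longleftrightarrow> (\<exists>S c. finite S \<and> (\<forall>x y z. f x y z = (\<Sum>s\<in>S. c s * monomial3 s x y z)))"
proof -
  have "(case s of (i, j, k) \<Rightarrow> c (i, j, k) * x ^ i * y ^ j * z ^ k) = c s * monomial3 s x y z"
    for c s and x y z :: complex
    by (cases s) (simp add: monomial3_def mult_ac)
  then show ?thesis unfolding poly3_fun_def by simp
qed

lemma poly3_fun_monomial3_family:
  assumes "finite A"
  shows "poly3_fun (\<lambda>x y z. \<Sum>a\<in>A. h a * monomial3 (\<phi> a) x y z)"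
proof -
  define c where "c s = (\<Sum>a\<in>{a\<in>A. \<phi> a = s}. h a)" for s
  have "(\<Sum>a\<in>A. h a * monomial3 (\<phi> a) x y z) = (\<Sum>s\<in>\<phi> ` A. c s * monomial3 s x y z)" for x y z
  proof -
    have "(\<Sum>a\<in>A. h a * monomial3 (\<phi> a) x y z)
        = (\<Sum>s\<in>\<phi> ` A. \<Sum>a\<in>{a\<in>A. \<phi> a = s}. h a * monomial3 (\<phi> a) x y z)"
      using assms by (intro sum.group[symmetric]) auto
    also have "\<dots> = (\<Sum>s\<in>\<phi> ` A. c s * monomial3 s x y z)"
      unfolding c_def sum_distrib_right by (intro sum.cong refl) auto
    finally show ?thesis .
  qed
  then show ?thesis
    unfolding poly3_fun_iff_monomial3 using assms by blast
qed

lemma poly3_fun_const: "poly3_fun (\<lambda>x y z. a)"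
  using poly3_fun_monomial3_family[of "{()}" "\<lambda>_. a" "\<lambda>_. (0, 0, 0)"]
  by (simp add: monomial3_def)

lemma poly3_fun_x: "poly3_fun (\<lambda>x y z. x)"
  using poly3_fun_monomial3_family[of "{()}" "\<lambda>_. 1" "\<lambda>_. (1, 0, 0)"]
  by (simp add: monomial3_def)

lemma poly3_fun_y: "poly3_fun (\<lambda>x y z. y)"
  using poly3_fun_monomial3_family[of "{()}" "\<lambda>_. 1" "\<lambda>_. (0, 1, 0)"]
  by (simp add: monomial3_def)

lemma poly3_fun_z: "poly3_fun (\<lambda>x y z. z)"
  using poly3_fun_monomial3_family[of "{()}" "\<lambda>_. 1" "\<lambda>_. (0, 0, 1)"]
  by (simp add: monomial3_def)

lemma poly3_fun_add:
  assumes "poly3_fun f" "poly3_fun g"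
  shows "poly3_fun (\<lambda>x y z. f x y z + g x y z)"
proof -
  obtain S c where S: "finite S" "\<And>x y z. f x y z = (\<Sum>s\<in>S. c s * monomial3 s x y z)"
    using assms(1) unfolding poly3_fun_iff_monomial3 by blast
  obtain T d where T: "finite T" "\<And>x y z. g x y z = (\<Sum>t\<in>T. d t * monomial3 t x y z)"
    using assms(2) unfolding poly3_fun_iff_monomial3 by blast
  have "poly3_fun (\<lambda>x y z. \<Sum>a\<in>S <+> T. case_sum c d a * monomial3 (case_sum id id a) x y z)"
    using S T by (intro poly3_fun_monomial3_family) simp
  then show ?thesis
    using S T by (simp add: sum.Plus comp_def)
qed

lemma poly3_fun_mult:
  assumes "poly3_fun f" "poly3_fun g"
  shows "poly3_fun (\<lambda>x y z. f x y z * g x y z)"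
proof -
  obtain S c where S: "finite S" "\<And>x y z. f x y z = (\<Sum>s\<in>S. c s * monomial3 s x y z)"
    using assms(1) unfolding poly3_fun_iff_monomial3 by blast
  obtain T d where T: "finite T" "\<And>x y z. g x y z = (\<Sum>t\<in>T. d t * monomial3 t x y z)"
    using assms(2) unfolding poly3_fun_iff_monomial3 by blast
  have "f x y z * g x y z
      = (\<Sum>(s, t)\<in>S \<times> T. (c s * d t) * monomial3 (s + t) x y z)" for x y z
    unfolding S T sum_product sum.cartesian_product monomial3_add
    by (intro sum.cong refl) (auto simp: mult_ac)
  moreover have "poly3_fun (\<lambda>x y z. \<Sum>(s, t)\<in>S \<times> T. (c s * d t) * monomial3 (s + t) x y z)"
    using poly3_fun_monomial3_family[of "S \<times> T" "\<lambda>(s, t). c s * d t" "\<lambda>(s, t). s + t"] S T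
    by (simp add: case_prod_unfold)
  ultimately show ?thesis by simp
qed

lemma poly3_fun_diff:
  assumes "poly3_fun f" "poly3_fun g"
  shows "poly3_fun (\<lambda>x y z. f x y z - g x y z)"
  using poly3_fun_add[OF assms(1) poly3_fun_mult[OF poly3_fun_const[of "-1"] assms(2)]]
  by simp

lemma poly3_fun_power:
  assumes "poly3_fun f"
  shows "poly3_fun (\<lambda>x y z. f x y z ^ m)"
  by (induction m) (simp_all add: poly3_fun_const poly3_fun_mult assms)

lemma poly3_fun_compose:
  assumes "poly3_fun f" "poly3_fun A" "poly3_fun B" "poly3_fun C"
  shows "poly3_fun (\<lambda>x y z. f (A x y z) (B x y z) (C x y z))"
proof -
  obtain S c where S: "finite S" "\<And>x y z. f x y z = (\<Sum>s\<in>S. c s * monomial3 s x y z)"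
    using assms(1) unfolding poly3_fun_iff_monomial3 by blast
  have "poly3_fun (\<lambda>x y z. \<Sum>s\<in>S'. c s * monomial3 s (A x y z) (B x y z) (C x y z))"
    if "finite S'" for S'
    using that
  proof (induction S' rule: finite_induct)
    case empty
    show ?case using poly3_fun_const[of 0] by simp
  next
    case (insert s S')
    have "poly3_fun (\<lambda>x y z. c s * monomial3 s (A x y z) (B x y z) (C x y z))"
      unfolding monomial3_def
      by (cases s) (simp, intro poly3_fun_mult poly3_fun_power poly3_fun_const assms)
    then show ?case using insert by (simp add: poly3_fun_add)
  qed
  then show ?thesis using S by simp
qed

lemma poly_automorphism3_x_plus_y_mult_shift:
  assumes "poly3_fun (\<lambda>x y z. G x y)"
  shows "poly_automorphism3 (\<lambda>x y z. x + y * (z + G x y)) (\<lambda>x y z. y) (\<lambda>x y z. z + G x y)"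
proof -
  define Q1 where "Q1 = (\<lambda>a b c :: complex. a - b * c)"
  define Q3 where "Q3 = (\<lambda>a b c. c - G (a - b * c) b)"
  have "poly3_fun Q1"
    unfolding Q1_def by (intro poly3_fun_diff poly3_fun_mult poly3_fun_x poly3_fun_y poly3_fun_z)
  moreover have "poly3_fun Q3"
    unfolding Q3_def
    using poly3_fun_compose[OF assms \<open>poly3_fun Q1\<close> poly3_fun_y poly3_fun_z]
    by (intro poly3_fun_diff poly3_fun_z) (simp add: Q1_def)
  moreover have "poly3_fun (\<lambda>x y z. x + y * (z + G x y))" "poly3_fun (\<lambda>x y z. z + G x y)"
    by (intro poly3_fun_add poly3_fun_mult poly3_fun_x poly3_fun_y poly3_fun_z assms)+
  moreover have "Q1 (x + y * (z + G x y)) y (z + G x y) = x"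
    and "Q3 (x + y * (z + G x y)) y (z + G x y) = z" for x y z
    by (simp_all add: Q1_def Q3_def)
  moreover have "Q1 a b c + b * (Q3 a b c + G (Q1 a b c) b) = a"
    and "Q3 a b c + G (Q1 a b c) b = c" for a b c
    by (simp_all add: Q1_def Q3_def)
  ultimately show ?thesis
    unfolding poly_automorphism3_def using poly3_fun_y by blast
qed

lemma f_nq_eq_x_plus_y_mult:
  fixes x y z :: complex and n q :: nat
  assumes "q > 0"
  shows "x - 3 * x ^ (2*n+1) * y ^ (2*q) + 2 * x ^ (3*n+1) * y ^ (3*q) + y * z
       = x + y * (z + y ^ (2*q-1) * x ^ (2*n+1) * (2 * x ^ n * y ^ q - 3))"
proof -
  have y2q: "y ^ (2*q) = y * y ^ (2*q-1)"
    using assms by (simp flip: power_Suc)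
  have y3q: "y ^ (3*q) = y * y ^ (2*q-1) * y ^ q"
    using power_add[of y "2*q" q] by (simp add: y2q)
  have x3n: "x ^ (3*n+1) = x ^ (2*n+1) * x ^ n"
    by (simp flip: power_add)
  show ?thesis
    unfolding y2q y3q x3n by algebra
qed

theorem mainTheorem1:
  fixes n q :: nat
  assumes "n > 0" and "q > 0"
  shows "\<exists>P2 P3. poly_automorphism3
           (\<lambda>x y z. x - 3 * x ^ (2*n+1) * y ^ (2*q) + 2 * x ^ (3*n+1) * y ^ (3*q) + y * z)
           P2 P3"
proof -
  define G :: "complex \<Rightarrow> complex \<Rightarrow> complex"
    where "G x y = y ^ (2*q-1) * x ^ (2*n+1) * (2 * x ^ n * y ^ q - 3)" for x y
  have "poly3_fun (\<lambda>x y z. G x y)"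
    unfolding G_def
    by (intro poly3_fun_mult poly3_fun_power poly3_fun_diff poly3_fun_const poly3_fun_x poly3_fun_y)
  then have "poly_automorphism3 (\<lambda>x y z. x + y * (z + G x y)) (\<lambda>x y z. y) (\<lambda>x y z. z + G x y)"
    by (rule poly_automorphism3_x_plus_y_mult_shift)
  then show ?thesis
    unfolding G_def f_nq_eq_x_plus_y_mult[OF \<open>q > 0\<close>] by blast
qed

end
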